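(* Let $M \ge 1$, $\mathcal{Y} = \{1,\ldots,M\}$, $K \le M$, and let ${\bm V} \in \mathbb{R}^{M\times K}$, so that ${\bm L} = {\bm V}{\bm V}^\top$ is a positive semi-definite kernel of rank at most $K$ defining a determinantal point process (DPP) on $\mathcal{Y}$. Let $A \subseteq \mathcal{Y}$ and $\bar A = \mathcal{Y}\setminus A$. Then the conditional marginal probabilities $P_i = \Pr(i \in Y \mid A \subseteq Y)$, for all $i \in \bar A$, of the DPP conditioned on the event that all items of $A$ are observed (i.e. of the DPP on $\bar A$ with conditioned kernel ${\bm L}^A$) can be computed, given ${\bm V}$ and $A$, in $\mathcal{O}(K^3 + |A|^3 + K^2|A|^2 + |\bar A|K^2)$ time.
   Context: A determinantal point process on the finite ground set $\mathcal{Y}$ with positive semi-definite kernel ${\bm L}\in\mathbb{R}^{M\times M}$ is the probability distribution on random subsets $Y\subseteq\mathcal{Y}$ given by $\Pr(Y = S) = \det({\bm L}_S)/\det({\bm L}+{\bm I})$, where ${\bm L}_S = [{\bm L}_{ij}]_{i,j\in S}$ (with $\det$ of the empty matrix equal to $1$). For $A \subseteq \mathcal{Y}$ with $\Pr(A\subseteq Y)>0$, conditioning this DPP on the event $A \subseteq Y$ gives a distribution of $Y\setminus A$ that is again a DPP on $\bar A = \mathcal{Y}\setminus A$, with kernel ${\bm L}^A$; its marginal probabilities are $P_i = \Pr(i\in Y \mid A\subseteq Y)$ for $i \in \bar A$. Time is measured in arithmetic operations on real numbers. *)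

theory Defs
  imports "HOL-Analysis.Analysis"
begin

text \<open>Matrices are functions nat => nat => real; the principal submatrix L_S is
the restriction to S x S, and its determinant is given by the Leibniz formula
(the determinant of the empty matrix is 1).\<close>

definition det_on :: "nat set \<Rightarrow> (nat \<Rightarrow> nat \<Rightarrow> real) \<Rightarrow> real" where
  "det_on S L = (\<Sum>p | p permutes S. of_int (sign p) * (\<Prod>i\<in>S. L i (p i)))"

definition gram :: "nat \<Rightarrow> (nat \<Rightarrow> nat \<Rightarrow> real) \<Rightarrow> (nat \<Rightarrow> nat \<Rightarrow> real)" where
  "gram K V = (\<lambda>i j. \<Sum>k<K. V i k * V j k)"

definition dpp_prob :: "nat \<Rightarrow> (nat \<Rightarrow> nat \<Rightarrow> real) \<Rightarrow> nat set \<Rightarrow> real" where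
  "dpp_prob M L S = det_on S L / det_on {..<M} (\<lambda>i j. L i j + (if i = j then 1 else 0))"

definition dpp_event_prob :: "nat \<Rightarrow> (nat \<Rightarrow> nat \<Rightarrow> real) \<Rightarrow> (nat set \<Rightarrow> bool) \<Rightarrow> real" where
  "dpp_event_prob M L E = (\<Sum>S\<in>{S. S \<subseteq> {..<M} \<and> E S}. dpp_prob M L S)"

definition cond_marginal :: "nat \<Rightarrow> (nat \<Rightarrow> nat \<Rightarrow> real) \<Rightarrow> nat set \<Rightarrow> nat \<Rightarrow> real" where
  "cond_marginal M L A i =
     dpp_event_prob M L (\<lambda>S. A \<union> {i} \<subseteq> S) / dpp_event_prob M L (\<lambda>S. A \<subseteq> S)"

text \<open>Arithmetic instructions
(+, -, *, /) and sign tests cost one operation each; loading a rational constant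
and reading the outputs are free.  The program
halts with a map telling, for each item i, which register holds the output.\<close>

datatype aop = Add | Sub | Mul | Div

datatype prog =
    Halt "nat \<Rightarrow> nat"
  | Arith aop nat nat nat prog   \<comment> \<open>Arith op dst src1 src2 next\<close>
  | Const rat nat prog           \<comment> \<open>Const q dst next\<close>
  | Branch nat prog prog         \<comment> \<open>if 0 < reg r then first else second\<close>

fun apply_aop :: "aop \<Rightarrow> real \<Rightarrow> real \<Rightarrow> real option" where
  "apply_aop Add x y = Some (x + y)"
| "apply_aop Sub x y = Some (x - y)"
| "apply_aop Mul x y = Some (x * y)"
| "apply_aop Div x y = (if y = 0 then None else Some (x / y))"

fun run :: "prog \<Rightarrow> (nat \<Rightarrow> real) \<Rightarrow> ((nat \<Rightarrow> real) \<times> nat) option" where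
  "run (Halt out) r = Some (\<lambda>i. r (out i), 0)"
| "run (Arith f d a b p) r =
     (case apply_aop f (r a) (r b) of
        None \<Rightarrow> None
      | Some v \<Rightarrow> (case run p (r(d := v)) of
                    None \<Rightarrow> None
                  | Some (o', c) \<Rightarrow> Some (o', Suc c)))"
| "run (Const q d p) r = run p (r(d := of_rat q))"
| "run (Branch t p1 p2) r =
     (case run (if 0 < r t then p1 else p2) r of
        None \<Rightarrow> None
      | Some (o', c) \<Rightarrow> Some (o', Suc c))"

definition input_regs :: "nat \<Rightarrow> nat \<Rightarrow> (nat \<Rightarrow> nat \<Rightarrow> real) \<Rightarrow> nat \<Rightarrow> real" where
  "input_regs M K V n = (if n < M * K then V (n div K) (n mod K) else 0)"

end

theory Submission
  imports Defs "HOL-Library.Countable"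
begin

(* All computation happens in the K-dimensional feature space.  Let T be the items forced into
   the sample and F the items already summed out, and write Z(E, F) for the sum of det L_S over
   E <= S <= E u F.  We maintain a symmetric positive semi-definite K x K matrix Q and a scalar c
   with  Z(T u R, F - R) = c * det (V Q V^T)_R  for every finite R disjoint from T, starting from
   T = F = {}, Q = I, c = 1.  Summing out an item with feature vector v is the rank-one identity
   det_R B + det_(R+j) B = (1 + B_jj) det_R (B - B_.j B_j. / (1 + B_jj)); forcing it in is a
   Schur complement with pivot v^T Q v, which cannot vanish when Pr(A <= Y) > 0 (a zero pivot
   gives a zero row by Cauchy-Schwarz).  Either way Q changes by a rank-one downdate costing
   O(K^2) operations.  After all M items the conditional marginal of i is v_i^T Q v_i, so the
   whole computation takes O(M K^2) operations, within the stated bound. *)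

section \<open>Determinants of principal submatrices\<close>

lemma det_on_empty [simp]: "det_on {} L = 1"
  unfolding det_on_def by simp

lemma det_on_singleton [simp]: "det_on {a} L = L a a"
  unfolding det_on_def by (simp add: permutes_sing)

lemma det_on_cong:
  assumes "\<And>i j. i \<in> S \<Longrightarrow> j \<in> S \<Longrightarrow> L i j = L' i j"
  shows "det_on S L = det_on S L'"
  unfolding det_on_def
proof (rule sum.cong[OF refl])
  fix p assume "p \<in> {p. p permutes S}"
  then have "\<And>i. i \<in> S \<Longrightarrow> p i \<in> S" by (simp add: permutes_in_image)
  then show "of_int (sign p) * (\<Prod>i\<in>S. L i (p i)) = of_int (sign p) * (\<Prod>i\<in>S. L' i (p i))"
    using assms by (metis (no_types, lifting) prod.cong)
qed

lemma det_on_transpose: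
  assumes "finite S"
  shows "det_on S (\<lambda>i j. L j i) = det_on S L"
proof -
  have "det_on S (\<lambda>i j. L j i) = (\<Sum>p | p permutes S. of_int (sign (inv p)) * (\<Prod>i\<in>S. L (inv p i) i))"
    unfolding det_on_def by (rule sum_permutations_inverse)
  also have "\<dots> = det_on S L"
    unfolding det_on_def
  proof (rule sum.cong[OF refl])
    fix p assume "p \<in> {p. p permutes S}"
    then have p: "p permutes S" by simp
    have "(\<Prod>i\<in>S. L (inv p i) i) = (\<Prod>i\<in>S. L (inv p (p i)) (p i))"
      using prod.permute[OF p, of "\<lambda>i. L (inv p i) i"] by (simp add: o_def)
    also have "\<dots> = (\<Prod>i\<in>S. L i (p i))"
      using permutes_inverses(2)[OF p] by simp
    finally show "of_int (sign (inv p)) * (\<Prod>i\<in>S. L (inv p i) i) = of_int (sign p) * (\<Prod>i\<in>S. L i (p i))"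
      using p assms by (metis permutation_permutes sign_inverse)
  qed
  finally show ?thesis .
qed

lemma det_on_row_linear:
  assumes "finite S" and "a \<in> S"
  shows "det_on S (\<lambda>i j. if i = a then c * x j + d * y j else L i j)
       = c * det_on S (\<lambda>i j. if i = a then x j else L i j) + d * det_on S (\<lambda>i j. if i = a then y j else L i j)"
proof -
  have split: "(\<Prod>i\<in>S. F i) = F a * (\<Prod>i\<in>S - {a}. F i)" for F :: "nat \<Rightarrow> real"
    using assms by (simp add: prod.remove)
  have rest: "(\<Prod>i\<in>S - {a}. if i = a then z (p i) else L i (p i)) = (\<Prod>i\<in>S - {a}. L i (p i))"
    for z :: "nat \<Rightarrow> real" and p
    by (rule prod.cong) auto
  show ?thesis
    unfolding det_on_def
    by (subst (1 2 3) split, simp only: rest if_True)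
      (simp add: sum_distrib_left sum.distrib[symmetric] algebra_simps)
qed

lemma det_on_swap_rows:
  assumes "finite S" and "a \<in> S" "b \<in> S" "a \<noteq> b"
  shows "det_on S (\<lambda>i j. L (Transposition.transpose a b i) j) = - det_on S L"
proof -
  let ?t = "Transposition.transpose a b"
  have t: "?t permutes S"
    using assms by (simp add: permutes_swap_id)
  have sign_t: "sign (p \<circ> ?t) = - sign p" if "p permutes S" for p
  proof -
    have "permutation p" "permutation ?t"
      using that t assms(1) permutation_permutes by blast+
    then show ?thesis using assms(4) by (simp add: sign_compose sign_swap_id)
  qed
  define f where "f p = of_int (sign (p \<circ> ?t)) * (\<Prod>i\<in>S. L i (p i))" for p
  have "det_on S (\<lambda>i j. L (?t i) j) = (\<Sum>p | p permutes S. f (p \<circ> ?t))"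
    unfolding det_on_def f_def
  proof (rule sum.cong[OF refl])
    fix p assume "p \<in> {p. p permutes S}"
    have "(\<Prod>i\<in>S. L (?t i) (p i)) = (\<Prod>i\<in>S. L (?t (?t i)) (p (?t i)))"
      using prod.permute[OF t, of "\<lambda>i. L (?t i) (p i)"] by (simp add: o_def)
    then show "of_int (sign p) * (\<Prod>i\<in>S. L (?t i) (p i))
        = of_int (sign (p \<circ> ?t \<circ> ?t)) * (\<Prod>i\<in>S. L i ((p \<circ> ?t) i))"
      by (simp add: o_assoc[symmetric])
  qed
  also have "\<dots> = (\<Sum>p | p permutes S. f p)"
    by (rule sum_permutations_compose_right[OF t, symmetric])
  also have "\<dots> = - det_on S L"
    unfolding det_on_def f_def sum_negf[symmetric] by (rule sum.cong) (simp_all add: sign_t)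
  finally show ?thesis .
qed

lemma det_on_equal_rows:
  assumes "finite S" and "a \<in> S" "b \<in> S" "a \<noteq> b" and "\<And>j. L a j = L b j"
  shows "det_on S L = 0"
proof -
  have "(\<lambda>i j. L (Transposition.transpose a b i) j) = L"
    using assms(5) by (intro ext) (simp add: Transposition.transpose_def)
  with det_on_swap_rows[OF assms(1-4), of L] show ?thesis by simp
qed

lemma det_on_row_add:
  assumes "finite S" and "a \<in> S" "b \<in> S" "a \<noteq> b"
  shows "det_on S (\<lambda>i j. if i = a then L a j + t * L b j else L i j) = det_on S L"
proof -
  have "det_on S (\<lambda>i j. if i = a then L a j + t * L b j else L i j)
      = det_on S (\<lambda>i j. if i = a then 1 * L a j + t * L b j else L i j)"
    by (rule det_on_cong) simp
  also have "\<dots> = 1 * det_on S (\<lambda>i j. if i = a then L a j else L i j)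
      + t * det_on S (\<lambda>i j. if i = a then L b j else L i j)"
    by (rule det_on_row_linear[OF assms(1,2)])
  also have "det_on S (\<lambda>i j. if i = a then L b j else L i j) = 0"
    by (rule det_on_equal_rows[OF assms]) (use assms(4) in auto)
  also have "(\<lambda>i j. if i = a then L a j else L i j) = L"
    by (intro ext) simp
  finally show ?thesis by simp
qed

lemma det_on_row_scale:
  assumes "finite S" and "a \<in> S"
  shows "det_on S (\<lambda>i j. if i = a then t * L i j else L i j) = t * det_on S L"
proof -
  have "det_on S (\<lambda>i j. if i = a then t * L i j else L i j)
      = det_on S (\<lambda>i j. if i = a then t * L a j + 0 * L a j else L i j)"
    by (rule det_on_cong) simp
  also have "\<dots> = t * det_on S (\<lambda>i j. if i = a then L a j else L i j)
      + 0 * det_on S (\<lambda>i j. if i = a then L a j else L i j)"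
    by (rule det_on_row_linear[OF assms])
  also have "(\<lambda>i j. if i = a then L a j else L i j) = L"
    by (intro ext) simp
  finally show ?thesis by simp
qed

lemma det_on_col_add:
  assumes "finite S" and "a \<in> S" "b \<in> S" "a \<noteq> b"
  shows "det_on S (\<lambda>i j. if j = a then L i a + t * L i b else L i j) = det_on S L"
  using det_on_transpose[OF assms(1), of "\<lambda>i j. if i = a then L j a + t * L j b else L j i"]
    det_on_row_add[OF assms, of "\<lambda>i j. L j i" t] det_on_transpose[OF assms(1), of L]
  by simp

lemma det_on_col_scale:
  assumes "finite S" and "a \<in> S"
  shows "det_on S (\<lambda>i j. if j = a then t * L i j else L i j) = t * det_on S L"
  using det_on_transpose[OF assms(1), of "\<lambda>i j. if i = a then t * L j i else L j i"]
    det_on_row_scale[OF assms, of t "\<lambda>i j. L j i"] det_on_transpose[OF assms(1), of L]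
  by simp

lemma det_on_cols_add:
  assumes "finite S" and "a \<in> S" and "finite X" "a \<notin> X"
  shows "det_on S (\<lambda>i j. if j \<in> X then L i j + c j * L i a else L i j) = det_on S L"
  using assms(3,4)
proof (induction X rule: finite_induct)
  case (insert x X)
  define L' where "L' = (\<lambda>i j. if j \<in> X then L i j + c j * L i a else L i j)"
  have "(\<lambda>i j. if j \<in> insert x X then L i j + c j * L i a else L i j)
      = (\<lambda>i j. if j = x then L' i x + c x * L' i a else L' i j)"
    using insert by (auto simp: L'_def fun_eq_iff)
  moreover have "det_on S (\<lambda>i j. if j = x then L' i x + c x * L' i a else L' i j) = det_on S L'"
  proof (cases "x \<in> S")
    case True
    then show ?thesis
      using det_on_col_add[OF assms(1) True assms(2)] insert.prems by (simp add: mult.commute)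
  next
    case False
    then show ?thesis by (intro det_on_cong) auto
  qed
  ultimately show ?case using insert by (simp add: L'_def)
qed simp

lemma permutes_remove_iff: "p permutes (S - {a}) \<longleftrightarrow> p permutes S \<and> p a = a"
  unfolding permutes_def by blast

lemma det_on_unit_row:
  assumes "finite S" and "a \<in> S" and "\<And>j. j \<in> S \<Longrightarrow> L a j = (if j = a then t else 0)"
  shows "det_on S L = t * det_on (S - {a}) L"
proof -
  have split: "(\<Prod>i\<in>S. L i (p i)) = L a (p a) * (\<Prod>i\<in>S - {a}. L i (p i))" for p
    using assms by (simp add: prod.remove)
  have "det_on S L = (\<Sum>p | p permutes S \<and> p a = a. of_int (sign p) * (\<Prod>i\<in>S. L i (p i)))"
    unfolding det_on_def
  proof (rule sum.mono_neutral_right)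
    show "\<forall>p \<in> {p. p permutes S} - {p. p permutes S \<and> p a = a}. of_int (sign p) * (\<Prod>i\<in>S. L i (p i)) = 0"
    proof
      fix p assume "p \<in> {p. p permutes S} - {p. p permutes S \<and> p a = a}"
      then have "p permutes S" "p a \<noteq> a" by auto
      then have "L a (p a) = 0"
        using assms(2,3) permutes_in_image by fastforce
      then show "of_int (sign p) * (\<Prod>i\<in>S. L i (p i)) = 0"
        by (simp add: split)
    qed
  qed (use assms(1) finite_permutations in auto)
  also have "\<dots> = (\<Sum>p | p permutes (S - {a}). t * (of_int (sign p) * (\<Prod>i\<in>S - {a}. L i (p i))))"
    unfolding permutes_remove_iff using assms by (intro sum.cong) (auto simp: split)
  also have "\<dots> = t * det_on (S - {a}) L"
    unfolding det_on_def by (simp add: sum_distrib_left)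
  finally show ?thesis .
qed

lemma det_on_pivot:
  assumes "finite R" and "a \<notin> R" and "B a a \<noteq> 0"
  shows "det_on (insert a R) B = B a a * det_on R (\<lambda>i j. B i j - B i a * B a j / B a a)"
proof -
  define B' where "B' = (\<lambda>i j. if j \<in> R then B i j + (- B a j / B a a) * B i a else B i j)"
  have "det_on (insert a R) B = det_on (insert a R) B'"
    unfolding B'_def using assms by (intro det_on_cols_add[symmetric]) auto
  also have "\<dots> = B a a * det_on (insert a R - {a}) B'"
    using assms by (intro det_on_unit_row) (auto simp: B'_def)
  also have "det_on (insert a R - {a}) B' = det_on R (\<lambda>i j. B i j - B i a * B a j / B a a)"
    using assms(2) by (auto intro!: det_on_cong simp: B'_def algebra_simps)
  finally show ?thesis .
qed

lemma det_on_rank_one_inside: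
  assumes "finite S" and "j \<in> S" and "1 + B j j \<noteq> 0"
  shows "det_on S B = (1 + B j j) * det_on S (\<lambda>r s. B r s - B r j * B j s / (1 + B j j))"
proof -
  define g where "g = 1 + B j j"
  define B' where "B' = (\<lambda>r s. B r s - B r j * B j s / g)"
  define B2 where "B2 = (\<lambda>r s. if s = j then g * B' r s else B' r s)"
  have g: "g \<noteq> 0" using assms(3) by (simp add: g_def)
  have col_j: "B' r j = B r j / g" for r
    using g by (simp add: B'_def g_def field_simps)
  have "det_on S B = det_on S (\<lambda>r s. if s \<in> S - {j} then B2 r s + (B j s / g) * B2 r j else B2 r s)"
  proof (rule det_on_cong)
    fix r s assume "s \<in> S"
    then show "B r s = (if s \<in> S - {j} then B2 r s + (B j s / g) * B2 r j else B2 r s)"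
      using g by (auto simp: B2_def col_j) (simp add: B'_def)
  qed
  also have "\<dots> = det_on S B2"
    using assms(1,2) by (intro det_on_cols_add) auto
  also have "\<dots> = g * det_on S B'"
    unfolding B2_def by (rule det_on_col_scale[OF assms(1,2)])
  finally show ?thesis unfolding g_def B'_def .
qed

lemma det_on_rank_one_outside:
  assumes "finite R" and "j \<notin> R" and "1 + B j j \<noteq> 0"
  shows "det_on R B + det_on (insert j R) B = (1 + B j j) * det_on R (\<lambda>r s. B r s - B r j * B j s / (1 + B j j))"
proof -
  define B' where "B' = (\<lambda>r s. if r = j then 1 * B j s + 1 * of_bool (s = j) else B r s)"
  have fin: "finite (insert j R)" using assms(1) by simp
  have "det_on (insert j R) B' = 1 * det_on (insert j R) (\<lambda>r s. if r = j then B j s else B r s)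
      + 1 * det_on (insert j R) (\<lambda>r s. if r = j then of_bool (s = j) else B r s)"
    unfolding B'_def by (rule det_on_row_linear[OF fin]) simp
  also have "(\<lambda>r s. if r = j then B j s else B r s) = B"
    by (intro ext) simp
  also have "det_on (insert j R) (\<lambda>r s. if r = j then of_bool (s = j) else B r s)
      = 1 * det_on (insert j R - {j}) (\<lambda>r s. if r = j then of_bool (s = j) else B r s)"
    by (rule det_on_unit_row[OF fin]) auto
  also have "det_on (insert j R - {j}) (\<lambda>r s. if r = j then of_bool (s = j) else B r s) = det_on R B"
    using assms(2) by (auto intro: det_on_cong)
  finally have "det_on R B + det_on (insert j R) B = det_on (insert j R) B'"
    by simp
  also have "\<dots> = B' j j * det_on R (\<lambda>r s. B' r s - B' r j * B' j s / B' j j)"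
    using assms by (intro det_on_pivot) (simp_all add: B'_def)
  also have "det_on R (\<lambda>r s. B' r s - B' r j * B' j s / B' j j)
      = det_on R (\<lambda>r s. B r s - B r j * B j s / (1 + B j j))"
    by (rule det_on_cong) (use assms(2) in \<open>auto simp: B'_def\<close>)
  also have "B' j j = 1 + B j j"
    by (simp add: B'_def)
  finally show ?thesis .
qed

definition partition_sum :: "(nat \<Rightarrow> nat \<Rightarrow> real) \<Rightarrow> nat set \<Rightarrow> nat set \<Rightarrow> real" where
  "partition_sum L E F = (\<Sum>S | E \<subseteq> S \<and> S \<subseteq> E \<union> F. det_on S L)"

lemma partition_sum_no_free [simp]: "partition_sum L E {} = det_on E L"
proof -
  have "{S. E \<subseteq> S \<and> S \<subseteq> E \<union> {}} = {E}" by auto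
  then show ?thesis unfolding partition_sum_def by simp
qed

lemma partition_sum_insert:
  assumes "finite E" "finite F" "j \<notin> E" "j \<notin> F"
  shows "partition_sum L E (insert j F) = partition_sum L E F + partition_sum L (insert j E) F"
proof -
  let ?out = "{S. E \<subseteq> S \<and> S \<subseteq> E \<union> F}" and ?in = "{S. insert j E \<subseteq> S \<and> S \<subseteq> insert j E \<union> F}"
  have "finite ?out" "finite ?in"
    using assms(1,2) by (auto intro: finite_subset[of _ "Pow (insert j E \<union> F)"])
  moreover have "?out \<inter> ?in = {}" using assms(3,4) by blast
  moreover have "{S. E \<subseteq> S \<and> S \<subseteq> E \<union> insert j F} = ?out \<union> ?in" by blast
  ultimately show ?thesis
    unfolding partition_sum_def by (simp add: sum.union_disjoint)
qed

lemma dpp_event_prob_superset: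
  assumes "B \<subseteq> {..<M}"
  shows "dpp_event_prob M L (\<lambda>S. B \<subseteq> S)
       = partition_sum L B ({..<M} - B) / det_on {..<M} (\<lambda>i j. L i j + (if i = j then 1 else 0))"
proof -
  have "{S. S \<subseteq> {..<M} \<and> B \<subseteq> S} = {S. B \<subseteq> S \<and> S \<subseteq> B \<union> ({..<M} - B)}"
    using assms by auto
  then show ?thesis
    unfolding dpp_event_prob_def dpp_prob_def partition_sum_def by (simp add: sum_divide_distrib)
qed

lemma cond_marginal_partition_sum:
  assumes "A \<subseteq> {..<M}" and "i \<in> {..<M} - A" and "0 < dpp_event_prob M L (\<lambda>S. A \<subseteq> S)"
  shows "cond_marginal M L A i = partition_sum L (insert i A) ({..<M} - A - {i}) / partition_sum L A ({..<M} - A)"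
proof -
  let ?D = "det_on {..<M} (\<lambda>i j. L i j + (if i = j then 1 else 0))"
  have "?D \<noteq> 0"
    using assms(3) dpp_event_prob_superset[OF assms(1)] by auto
  moreover have "A \<union> {i} = insert i A" "{..<M} - A - {i} = {..<M} - insert i A"
    by auto
  moreover have "insert i A \<subseteq> {..<M}"
    using assms(1,2) by auto
  ultimately show ?thesis
    unfolding cond_marginal_def using assms(1) by (simp only: dpp_event_prob_superset) simp
qed

section \<open>Conditioning in feature space\<close>

lemma discriminant_nonpos:
  fixes a b c :: real
  assumes "\<And>t. 0 \<le> a + 2 * t * b + t\<^sup>2 * c" and "0 \<le> c"
  shows "b\<^sup>2 \<le> a * c"
proof (cases "c = 0")
  case True
  show ?thesis
  proof (rule ccontr)
    assume "\<not> ?thesis"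
    then have "b \<noteq> 0" using True by simp
    have "0 \<le> a + 2 * (- (a + 1) / (2 * b)) * b + (- (a + 1) / (2 * b))\<^sup>2 * c"
      by (rule assms(1))
    also have "\<dots> = -1"
      using \<open>b \<noteq> 0\<close> True by (simp add: field_simps)
    finally show False by simp
  qed
next
  case False
  then have "0 < c" using assms(2) by simp
  have "0 \<le> a + 2 * (- b / c) * b + (- b / c)\<^sup>2 * c"
    by (rule assms(1))
  also have "\<dots> = (a * c - b\<^sup>2) / c"
    using \<open>0 < c\<close> by (simp add: field_simps power2_eq_square)
  finally show ?thesis
    using \<open>0 < c\<close> by (simp add: zero_le_divide_iff)
qed

context
  fixes K :: nat
begin

definition bilin :: "(nat \<Rightarrow> nat \<Rightarrow> real) \<Rightarrow> (nat \<Rightarrow> real) \<Rightarrow> (nat \<Rightarrow> real) \<Rightarrow> real" where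
  "bilin Q x y = (\<Sum>a<K. \<Sum>b<K. x a * Q a b * y b)"

definition symmetric :: "(nat \<Rightarrow> nat \<Rightarrow> real) \<Rightarrow> bool" where
  "symmetric Q \<longleftrightarrow> (\<forall>a<K. \<forall>b<K. Q a b = Q b a)"

definition psd :: "(nat \<Rightarrow> nat \<Rightarrow> real) \<Rightarrow> bool" where
  "psd Q \<longleftrightarrow> (\<forall>x. 0 \<le> bilin Q x x)"

definition mat_vec :: "(nat \<Rightarrow> nat \<Rightarrow> real) \<Rightarrow> (nat \<Rightarrow> real) \<Rightarrow> nat \<Rightarrow> real" where
  "mat_vec Q v a = (\<Sum>b<K. Q a b * v b)"

definition denom :: "bool \<Rightarrow> (nat \<Rightarrow> nat \<Rightarrow> real) \<Rightarrow> (nat \<Rightarrow> real) \<Rightarrow> real" where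
  "denom free Q v = of_bool free + (\<Sum>a<K. v a * mat_vec Q v a)"

text \<open>The flag \<open>free\<close> selects the pivot \<open>1 + v\<^sup>T Q v\<close> for an item that is summed out
  and \<open>v\<^sup>T Q v\<close> for an item forced into the sample.\<close>

definition downdate :: "bool \<Rightarrow> (nat \<Rightarrow> nat \<Rightarrow> real) \<Rightarrow> (nat \<Rightarrow> real) \<Rightarrow> nat \<Rightarrow> nat \<Rightarrow> real" where
  "downdate free Q v a b = Q a b - mat_vec Q v a * mat_vec Q v b / denom free Q v"

lemma bilin_mat_vec: "bilin Q x y = (\<Sum>a<K. x a * mat_vec Q y a)"
  unfolding bilin_def mat_vec_def by (simp add: sum_distrib_left mult.assoc)

lemma bilin_mat_vec_left:
  assumes "symmetric Q"
  shows "bilin Q x y = (\<Sum>b<K. mat_vec Q x b * y b)"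
proof -
  have "bilin Q x y = (\<Sum>a<K. \<Sum>b<K. x b * Q a b * y a)"
    unfolding bilin_def using assms
    by (subst sum.swap) (auto simp: symmetric_def intro!: sum.cong)
  then show ?thesis
    unfolding mat_vec_def by (auto simp: sum_distrib_left sum_distrib_right mult_ac intro!: sum.cong)
qed

lemma denom_eq: "denom free Q v = of_bool free + bilin Q v v"
  unfolding denom_def bilin_mat_vec ..

lemma bilin_commute: "symmetric Q \<Longrightarrow> bilin Q x y = bilin Q y x"
  unfolding bilin_def symmetric_def
  by (subst sum.swap) (auto intro!: sum.cong simp: mult_ac)

lemma bilin_downdate:
  assumes "symmetric Q"
  shows "bilin (downdate free Q v) x y = bilin Q x y - bilin Q x v * bilin Q v y / denom free Q v"
proof -
  have "(\<Sum>a<K. x a * mat_vec Q v a) * (\<Sum>b<K. mat_vec Q v b * y b) / denom free Q v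
      = (\<Sum>a<K. \<Sum>b<K. x a * mat_vec Q v a * (mat_vec Q v b * y b) / denom free Q v)"
    by (simp add: sum_product sum_divide_distrib)
  then have "bilin (downdate free Q v) x y
      = bilin Q x y - (\<Sum>a<K. x a * mat_vec Q v a) * (\<Sum>b<K. mat_vec Q v b * y b) / denom free Q v"
    unfolding bilin_def downdate_def by (simp add: algebra_simps sum_subtractf)
  then show ?thesis
    using bilin_mat_vec_left[OF assms, of v y] by (simp add: bilin_mat_vec)
qed

lemma symmetric_downdate: "symmetric Q \<Longrightarrow> symmetric (downdate free Q v)"
  unfolding symmetric_def downdate_def by (simp add: mult.commute)

lemma bilin_add_smult:
  "bilin Q (\<lambda>a. x a + t * y a) (\<lambda>a. x a + t * y a)
     = bilin Q x x + t * bilin Q x y + t * bilin Q y x + t\<^sup>2 * bilin Q y y"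
  unfolding bilin_def power2_eq_square
  by (simp add: algebra_simps sum.distrib sum_distrib_left)

lemma bilin_Cauchy_Schwarz:
  assumes "symmetric Q" "psd Q"
  shows "(bilin Q x y)\<^sup>2 \<le> bilin Q x x * bilin Q y y"
proof (rule discriminant_nonpos)
  fix t
  have "0 \<le> bilin Q (\<lambda>a. x a + t * y a) (\<lambda>a. x a + t * y a)"
    using assms(2) by (simp add: psd_def)
  then show "0 \<le> bilin Q x x + 2 * t * bilin Q x y + t\<^sup>2 * bilin Q y y"
    unfolding bilin_add_smult using bilin_commute[OF assms(1), of y x] by simp
qed (use assms(2) psd_def in blast)

lemma psd_downdate:
  assumes "symmetric Q" "psd Q" and "0 < denom free Q v"
  shows "psd (downdate free Q v)"
  unfolding psd_def
proof
  fix x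
  let ?g = "denom free Q v"
  have "bilin Q x v * bilin Q v x / ?g = (bilin Q x v)\<^sup>2 / ?g"
    using bilin_commute[OF assms(1), of v x] by (simp add: power2_eq_square)
  also have "\<dots> \<le> bilin Q x x * bilin Q v v / ?g"
    using bilin_Cauchy_Schwarz[OF assms(1,2)] assms(3) by (simp add: divide_right_mono)
  also have "\<dots> \<le> bilin Q x x"
  proof -
    have "0 \<le> bilin Q x x" "bilin Q v v \<le> ?g"
      using assms(2) by (simp_all add: psd_def denom_eq)
    then show ?thesis
      using assms(3) by (simp add: divide_le_eq mult_left_mono)
  qed
  finally show "0 \<le> bilin (downdate free Q v) x x"
    unfolding bilin_downdate[OF assms(1)] by simp
qed

lemma denom_free_pos: "psd Q \<Longrightarrow> 0 < denom True Q v"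
  unfolding psd_def denom_eq by (simp add: add_pos_nonneg)

context
  fixes V :: "nat \<Rightarrow> nat \<Rightarrow> real"
begin

definition weighted_gram :: "(nat \<Rightarrow> nat \<Rightarrow> real) \<Rightarrow> nat \<Rightarrow> nat \<Rightarrow> real" where
  "weighted_gram Q i j = bilin Q (V i) (V j)"

definition represents :: "nat set \<Rightarrow> nat set \<Rightarrow> real \<Rightarrow> (nat \<Rightarrow> nat \<Rightarrow> real) \<Rightarrow> bool" where
  "represents T F c Q \<longleftrightarrow> symmetric Q \<and> psd Q \<and> finite T \<and> finite F \<and> T \<inter> F = {} \<and>
     (\<forall>R. finite R \<longrightarrow> R \<inter> T = {} \<longrightarrow>
        partition_sum (gram K V) (T \<union> R) (F - R) = c * det_on R (weighted_gram Q))"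

lemma weighted_gram_downdate:
  assumes "symmetric Q"
  shows "weighted_gram (downdate free Q (V j))
       = (\<lambda>r s. weighted_gram Q r s - weighted_gram Q r j * weighted_gram Q j s / denom free Q (V j))"
  unfolding weighted_gram_def bilin_downdate[OF assms] ..

lemma represents_init: "represents {} {} 1 (\<lambda>a b. of_bool (a = b))"
proof -
  have "weighted_gram (\<lambda>a b. of_bool (a = b)) = gram K V"
    unfolding weighted_gram_def bilin_def gram_def
    by (intro ext) (simp add: of_bool_def if_distrib if_distribR sum.delta cong: if_cong)
  moreover have "0 \<le> bilin (\<lambda>a b. of_bool (a = b)) x x" for x
    unfolding bilin_def
    by (simp add: of_bool_def if_distrib if_distribR sum.delta cong: if_cong) (rule sum_nonneg, simp)
  ultimately show ?thesis
    unfolding represents_def symmetric_def psd_def by auto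
qed

lemma represents_free:
  assumes rep: "represents T F c Q" and "j \<notin> T" "j \<notin> F"
  shows "represents T (insert j F) (c * denom True Q (V j)) (downdate True Q (V j))"
proof -
  have sym: "symmetric Q" and "psd Q" "finite T" "finite F" "T \<inter> F = {}"
    and Z: "\<And>R. finite R \<Longrightarrow> R \<inter> T = {} \<Longrightarrow>
      partition_sum (gram K V) (T \<union> R) (F - R) = c * det_on R (weighted_gram Q)"
    using rep unfolding represents_def by auto
  let ?g = "denom True Q (V j)"
  have g: "0 < ?g" "?g = 1 + weighted_gram Q j j"
    using denom_free_pos[OF \<open>psd Q\<close>] by (simp_all add: denom_eq weighted_gram_def)
  have "partition_sum (gram K V) (T \<union> R) (insert j F - R) = c * ?g * det_on R (weighted_gram (downdate True Q (V j)))"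
    if R: "finite R" "R \<inter> T = {}" for R
  proof (cases "j \<in> R")
    case True
    then have "partition_sum (gram K V) (T \<union> R) (insert j F - R) = c * det_on R (weighted_gram Q)"
      using Z[OF R] by (simp add: insert_Diff_if)
    also have "det_on R (weighted_gram Q) = ?g * det_on R (weighted_gram (downdate True Q (V j)))"
      unfolding weighted_gram_downdate[OF sym] g(2) using R(1) True g by (intro det_on_rank_one_inside) auto
    finally show ?thesis by simp
  next
    case False
    have "partition_sum (gram K V) (T \<union> R) (insert j F - R)
        = partition_sum (gram K V) (T \<union> R) (F - R) + partition_sum (gram K V) (T \<union> insert j R) (F - insert j R)"
      using False assms(2,3) \<open>finite T\<close> \<open>finite F\<close> R(1)
      by (simp add: insert_Diff_if partition_sum_insert)
    also have "\<dots> = c * (det_on R (weighted_gram Q) + det_on (insert j R) (weighted_gram Q))"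
      using Z[OF R] Z[of "insert j R"] R assms(2) by (simp add: algebra_simps)
    also have "det_on R (weighted_gram Q) + det_on (insert j R) (weighted_gram Q)
        = ?g * det_on R (weighted_gram (downdate True Q (V j)))"
      unfolding weighted_gram_downdate[OF sym] g(2) using R(1) False g by (intro det_on_rank_one_outside) auto
    finally show ?thesis by simp
  qed
  then show ?thesis
    using rep assms(2,3) psd_downdate[OF sym \<open>psd Q\<close> g(1)]
    by (auto simp: represents_def symmetric_downdate)
qed

lemma represents_forced:
  assumes rep: "represents T F c Q" and "a \<notin> T" "a \<notin> F" and nz: "denom False Q (V a) \<noteq> 0"
  shows "represents (insert a T) F (c * denom False Q (V a)) (downdate False Q (V a))"
proof -
  have sym: "symmetric Q" and "psd Q"
    and Z: "\<And>R. finite R \<Longrightarrow> R \<inter> T = {} \<Longrightarrow>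
      partition_sum (gram K V) (T \<union> R) (F - R) = c * det_on R (weighted_gram Q)"
    using rep unfolding represents_def by auto
  let ?g = "denom False Q (V a)"
  have g: "0 < ?g" "?g = weighted_gram Q a a"
    using nz \<open>psd Q\<close> unfolding denom_eq weighted_gram_def psd_def
    by (simp_all add: order_le_less) blast
  have "partition_sum (gram K V) (insert a T \<union> R) (F - R) = c * ?g * det_on R (weighted_gram (downdate False Q (V a)))"
    if R: "finite R" "R \<inter> insert a T = {}" for R
  proof -
    have "partition_sum (gram K V) (insert a T \<union> R) (F - R) = c * det_on (insert a R) (weighted_gram Q)"
      using Z[of "insert a R"] R assms(2,3) by (simp add: insert_Diff_if)
    also have "det_on (insert a R) (weighted_gram Q) = ?g * det_on R (weighted_gram (downdate False Q (V a)))"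
      unfolding weighted_gram_downdate[OF sym] g(2) using R g by (intro det_on_pivot) auto
    finally show ?thesis by simp
  qed
  then show ?thesis
    using rep assms(2,3) psd_downdate[OF sym \<open>psd Q\<close> g(1)]
    by (auto simp: represents_def symmetric_downdate)
qed

text \<open>A vanishing pivot \<open>v\<^sup>T Q v\<close> makes the whole row of \<open>V Q V\<^sup>T\<close> vanish by
  Cauchy-Schwarz, and with it the partition sum.\<close>

lemma forced_denom_nonzero:
  assumes rep: "represents T F c Q" and "finite R" "R \<inter> (T \<union> F) = {}" "a \<in> R"
    and "partition_sum (gram K V) (T \<union> R) F \<noteq> 0"
  shows "denom False Q (V a) \<noteq> 0"
proof
  assume zero: "denom False Q (V a) = 0"
  have sym: "symmetric Q" and "psd Q"
    using rep unfolding represents_def by auto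
  have "weighted_gram Q a j = 0" for j
    using bilin_Cauchy_Schwarz[OF sym \<open>psd Q\<close>, of "V a" "V j"] zero
    by (simp add: weighted_gram_def denom_eq)
  then have "det_on R (weighted_gram Q) = 0"
    using det_on_unit_row[OF assms(2,4), of "weighted_gram Q" 0] by simp
  moreover have "F - R = F"
    using assms(3) by blast
  ultimately have "partition_sum (gram K V) (T \<union> R) F = 0"
    using rep assms(2,3) unfolding represents_def by (metis Int_Un_distrib mult_zero_right sup_eq_bot_iff)
  with assms(5) show False ..
qed

definition updates :: "bool \<Rightarrow> (nat \<Rightarrow> nat \<Rightarrow> real) \<Rightarrow> nat list \<Rightarrow> nat \<Rightarrow> nat \<Rightarrow> real" where
  "updates free Q xs = fold (\<lambda>j Q. downdate free Q (V j)) xs Q"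

definition pivots_nonzero :: "bool \<Rightarrow> (nat \<Rightarrow> nat \<Rightarrow> real) \<Rightarrow> nat list \<Rightarrow> bool" where
  "pivots_nonzero free Q xs \<longleftrightarrow> (\<forall>ys x zs. xs = ys @ x # zs \<longrightarrow> denom free (updates free Q ys) (V x) \<noteq> 0)"

lemma updates_Nil [simp]: "updates free Q [] = Q"
  and updates_Cons [simp]: "updates free Q (x # xs) = updates free (downdate free Q (V x)) xs"
  and updates_append: "updates free Q (xs @ ys) = updates free (updates free Q xs) ys"
  by (simp_all add: updates_def)

lemma represents_free_updates:
  assumes "represents T F c Q" "distinct xs" "set xs \<inter> (T \<union> F) = {}"
  shows "\<exists>c'. represents T (F \<union> set xs) c' (updates True Q xs)"
  using assms
proof (induction xs arbitrary: F c Q)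
  case (Cons x xs)
  then have "represents T (insert x F) (c * denom True Q (V x)) (downdate True Q (V x))"
    by (intro represents_free) auto
  from Cons.IH[OF this] Cons.prems(2,3) show ?case by auto
qed auto

text \<open>\<open>R\<close> collects the items still to be forced; the nonzero partition sum of the final event
  rules out a vanishing pivot at every step.\<close>

lemma represents_forced_updates:
  assumes "represents T F c Q" "distinct xs" "finite R" "set xs \<subseteq> R" "R \<inter> (T \<union> F) = {}"
    and "partition_sum (gram K V) (T \<union> R) F \<noteq> 0"
  shows "\<exists>c'. represents (T \<union> set xs) F c' (updates False Q xs)"
  using assms
proof (induction xs arbitrary: T c Q R)
  case (Cons x xs)
  have "denom False Q (V x) \<noteq> 0"
    using Cons.prems by (intro forced_denom_nonzero[of T F c Q R]) auto
  then have rep: "represents (insert x T) F (c * denom False Q (V x)) (downdate False Q (V x))"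
    using Cons.prems by (intro represents_forced) auto
  have "insert x T \<union> (R - {x}) = T \<union> R"
    using Cons.prems(4) by auto
  then have Z: "partition_sum (gram K V) (insert x T \<union> (R - {x})) F \<noteq> 0"
    using Cons.prems(6) by simp
  have "\<exists>c'. represents (insert x T \<union> set xs) F c' (updates False (downdate False Q (V x)) xs)"
    by (rule Cons.IH[OF rep _ _ _ _ Z]) (use Cons.prems in auto)
  then show ?case by simp
qed auto

lemma pivots_nonzero_free:
  assumes "represents T F c Q" "distinct xs" "set xs \<inter> (T \<union> F) = {}"
  shows "pivots_nonzero True Q xs"
  unfolding pivots_nonzero_def
proof (intro allI impI)
  fix ys x zs assume "xs = ys @ x # zs"
  then obtain c' where "represents T (F \<union> set ys) c' (updates True Q ys)"
    using represents_free_updates[OF assms(1), of ys] assms(2,3) by auto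
  then show "denom True (updates True Q ys) (V x) \<noteq> 0"
    using denom_free_pos unfolding represents_def by (metis less_irrefl)
qed

lemma pivots_nonzero_forced:
  assumes rep: "represents T F c Q" and "distinct xs" "finite R" "set xs \<subseteq> R" "R \<inter> (T \<union> F) = {}"
    and Z: "partition_sum (gram K V) (T \<union> R) F \<noteq> 0"
  shows "pivots_nonzero False Q xs"
  unfolding pivots_nonzero_def
proof (intro allI impI)
  fix ys x zs assume split: "xs = ys @ x # zs"
  then obtain c' where rep': "represents (T \<union> set ys) F c' (updates False Q ys)"
    using represents_forced_updates[OF rep _ assms(3) _ assms(5) Z, of ys] assms(2,4) by auto
  have "(T \<union> set ys) \<union> (R - set ys) = T \<union> R"
    using assms(4) split by auto
  then show "denom False (updates False Q ys) (V x) \<noteq> 0"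
    using forced_denom_nonzero[OF rep', of "R - set ys" x] assms(2-5) split Z by auto
qed

lemma cond_marginal_represents:
  assumes "A \<subseteq> {..<M}" and "0 < dpp_event_prob M (gram K V) (\<lambda>S. A \<subseteq> S)"
    and "represents A ({..<M} - A) c Q" and "i \<in> {..<M} - A"
  shows "cond_marginal M (gram K V) A i = bilin Q (V i) (V i)"
proof -
  have Z: "partition_sum (gram K V) (A \<union> R) ({..<M} - A - R) = c * det_on R (weighted_gram Q)"
    if "finite R" "R \<inter> A = {}" for R
    using assms(3) that unfolding represents_def by blast
  have "partition_sum (gram K V) A ({..<M} - A) = c"
    using Z[of "{}"] by simp
  moreover have "partition_sum (gram K V) (insert i A) ({..<M} - A - {i}) = c * bilin Q (V i) (V i)"
    using Z[of "{i}"] assms(4) by (simp add: weighted_gram_def)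
  moreover have "partition_sum (gram K V) A ({..<M} - A) \<noteq> 0"
    using assms(1,2) by (auto simp: dpp_event_prob_superset)
  ultimately show ?thesis
    using cond_marginal_partition_sum[OF assms(1,4,2)] by simp
qed

lemma represents_conditioned:
  assumes "A \<subseteq> {..<M}" and "0 < dpp_event_prob M (gram K V) (\<lambda>S. A \<subseteq> S)"
    and "distinct fl" "set fl = {..<M} - A" "distinct al" "set al = A"
  shows "\<exists>c. represents A ({..<M} - A) c (updates False (updates True (\<lambda>a b. of_bool (a = b)) fl) al)"
    and "pivots_nonzero True (\<lambda>a b. of_bool (a = b)) fl"
    and "pivots_nonzero False (updates True (\<lambda>a b. of_bool (a = b)) fl) al"
proof -
  have fin: "finite A" using assms(1) finite_subset by blast
  have Z: "partition_sum (gram K V) ({} \<union> A) ({..<M} - A) \<noteq> 0"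
    using assms(1,2) by (auto simp: dpp_event_prob_superset)
  obtain c where rep: "represents {} ({..<M} - A) c (updates True (\<lambda>a b. of_bool (a = b)) fl)"
    using represents_free_updates[OF represents_init, of fl] assms(3,4) by auto
  show "\<exists>c. represents A ({..<M} - A) c (updates False (updates True (\<lambda>a b. of_bool (a = b)) fl) al)"
    using represents_forced_updates[OF rep assms(5) fin _ _ Z] assms(6) by auto
  show "pivots_nonzero True (\<lambda>a b. of_bool (a = b)) fl"
    using pivots_nonzero_free[OF represents_init assms(3)] by simp
  show "pivots_nonzero False (updates True (\<lambda>a b. of_bool (a = b)) fl) al"
    using pivots_nonzero_forced[OF rep assms(5) fin _ _ Z] assms(6) by auto
qed

end

end

section \<open>Straight-line programs with cost\<close>

type_synonym frag = "prog \<Rightarrow> prog"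

text \<open>A fragment is a program with a hole for its continuation: \<open>hoare P f n W R\<close> states that
  from a state satisfying \<open>P\<close> the fragment performs exactly \<open>n\<close> operations, writes only
  registers in \<open>W\<close>, and passes a state satisfying \<open>R\<close> to every continuation.\<close>

definition hoare :: "((nat \<Rightarrow> real) \<Rightarrow> bool) \<Rightarrow> frag \<Rightarrow> nat \<Rightarrow> nat set \<Rightarrow> ((nat \<Rightarrow> real) \<Rightarrow> bool) \<Rightarrow> bool" where
  "hoare P f n W R \<longleftrightarrow> (\<forall>k r. P r \<longrightarrow> (\<exists>r'. R r' \<and> (\<forall>x. x \<notin> W \<longrightarrow> r' x = r x) \<and>
      run (f k) r = map_option (apsnd (\<lambda>c. c + n)) (run k r')))"

lemma hoare_arith:
  assumes "\<And>r. P r \<Longrightarrow> \<exists>v. apply_aop f (r a) (r b) = Some v \<and> R (r(d := v))"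
  shows "hoare P (Arith f d a b) 1 {d} R"
  unfolding hoare_def
proof (intro allI impI)
  fix k r assume "P r"
  with assms obtain v where "apply_aop f (r a) (r b) = Some v" "R (r(d := v))" by blast
  then show "\<exists>r'. R r' \<and> (\<forall>x. x \<notin> {d} \<longrightarrow> r' x = r x) \<and>
      run (Arith f d a b k) r = map_option (apsnd (\<lambda>c. c + 1)) (run k r')"
    by (intro exI[of _ "r(d := v)"]) (auto split: option.split)
qed

lemma hoare_const:
  assumes "\<And>r. P r \<Longrightarrow> R (r(d := of_rat q))"
  shows "hoare P (Const q d) 0 {d} R"
  unfolding hoare_def using assms
  by (auto intro!: exI[of _ "_(d := of_rat q)"] simp: apsnd_def map_prod_def option.map_id)

lemma hoare_seq:
  assumes "hoare P f m W Q" and "hoare Q g n W' R" and "m + n = k" and "W \<union> W' \<subseteq> W''"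
  shows "hoare P (f \<circ> g) k W'' R"
  unfolding hoare_def
proof (intro allI impI)
  fix c r assume "P r"
  then obtain r1 where r1: "Q r1" "\<forall>x. x \<notin> W \<longrightarrow> r1 x = r x"
    "run (f (g c)) r = map_option (apsnd (\<lambda>c. c + m)) (run (g c) r1)"
    using assms(1) unfolding hoare_def by blast
  then obtain r2 where r2: "R r2" "\<forall>x. x \<notin> W' \<longrightarrow> r2 x = r1 x"
    "run (g c) r1 = map_option (apsnd (\<lambda>c. c + n)) (run c r2)"
    using assms(2) unfolding hoare_def by blast
  have "run ((f \<circ> g) c) r = map_option (apsnd (\<lambda>c. c + k)) (run c r2)"
    using assms(3)
    by (simp add: r1(3) r2(3) option.map_comp apsnd_def map_prod_def o_def split_def add.assoc add.commute[of m])
  moreover have "\<forall>x. x \<notin> W'' \<longrightarrow> r2 x = r x"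
  proof (intro allI impI)
    fix x assume "x \<notin> W''"
    then have "x \<notin> W" "x \<notin> W'"
      using assms(4) by auto
    then show "r2 x = r x"
      using r1(2) r2(2) by simp
  qed
  ultimately show "\<exists>r'. R r' \<and> (\<forall>x. x \<notin> W'' \<longrightarrow> r' x = r x) \<and>
      run ((f \<circ> g) c) r = map_option (apsnd (\<lambda>c. c + k)) (run c r')"
    using r2(1) by (intro exI[of _ r2]) simp
qed

lemma hoare_frame:
  assumes "hoare P f n W R"
    and "\<And>r. P' r \<Longrightarrow> P r \<and> F r"
    and "\<And>r r'. F r \<Longrightarrow> \<forall>x. x \<notin> W \<longrightarrow> r' x = r x \<Longrightarrow> F r'"
    and "\<And>r. R r \<Longrightarrow> F r \<Longrightarrow> R' r" and "W \<subseteq> W'"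
  shows "hoare P' f n W' R'"
  using assms unfolding hoare_def by (smt (verit) subset_iff)

lemma hoare_conseq:
  assumes "hoare P f n W R" "\<And>r. P' r \<Longrightarrow> P r" "\<And>r. R r \<Longrightarrow> R' r" "W \<subseteq> W'"
  shows "hoare P' f n W' R'"
  by (rule hoare_frame[OF assms(1), where F = "\<lambda>_. True"]) (use assms in auto)

lemma hoare_run:
  assumes "hoare P f n W R" "P r"
  shows "\<exists>r'. R r' \<and> run (f (Halt out)) r = Some (\<lambda>i. r' (out i), n)"
proof -
  obtain r' where "R r'" "run (f (Halt out)) r = map_option (apsnd (\<lambda>c. c + n)) (run (Halt out) r')"
    using assms unfolding hoare_def by blast
  then show ?thesis by auto
qed

primrec for_each :: "('a \<Rightarrow> frag) \<Rightarrow> 'a list \<Rightarrow> frag" where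
  "for_each f [] = id"
| "for_each f (x # xs) = f x \<circ> for_each f xs"

lemma hoare_for_each:
  assumes "\<And>ys x zs. xs = ys @ x # zs \<Longrightarrow> hoare (I ys) (f x) n W (I (ys @ [x]))"
  shows "hoare (I []) (for_each f xs) (length xs * n) W (I xs)"
  using assms
proof (induction xs arbitrary: I)
  case Nil
  show ?case
    unfolding hoare_def by (auto simp: apsnd_def map_prod_def option.map_id)
next
  case (Cons x xs)
  have "hoare (I []) (f x) n W (I [x])"
    using Cons.prems[of "[]"] by simp
  moreover have "hoare (I [x]) (for_each f xs) (length xs * n) W (I (x # xs))"
    using Cons.IH[of "\<lambda>ys. I (x # ys)"] Cons.prems[of "x # _"] by simp
  ultimately show ?case
    unfolding for_each.simps by (rule hoare_seq) auto
qed

lemma hoare_for_upto: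
  assumes "\<And>i. i < m \<Longrightarrow> hoare (I i) (f i) n W (I (Suc i))"
  shows "hoare (I 0) (for_each f [0..<m]) (m * n) W (I m)"
proof -
  have "hoare (I (length ys)) (f x) n W (I (length (ys @ [x])))" if split: "[0..<m] = ys @ x # zs" for ys x zs
  proof -
    have "length ys < m"
      using arg_cong[OF split, of length] by simp
    moreover have "x = [0..<m] ! length ys"
      by (simp add: split)
    ultimately show ?thesis
      using assms[of x] by simp
  qed
  from hoare_for_each[of "[0..<m]" "\<lambda>ys. I (length ys)", OF this] show ?thesis
    by simp
qed

lemma of_rat_of_bool [simp]: "of_rat (of_bool b) = of_bool b"
  by (cases b) simp_all

definition dot :: "nat \<Rightarrow> nat \<Rightarrow> (nat \<Rightarrow> nat) \<Rightarrow> (nat \<Rightarrow> nat) \<Rightarrow> nat \<Rightarrow> frag" where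
  "dot acc tmp xs ys n = Const 0 acc \<circ> for_each (\<lambda>t. Arith Mul tmp (xs t) (ys t) \<circ> Arith Add acc acc tmp) [0..<n]"

lemma hoare_dot:
  assumes "acc \<noteq> tmp" and "\<And>t. t < n \<Longrightarrow> xs t \<notin> {acc, tmp} \<and> ys t \<notin> {acc, tmp}"
  shows "hoare (\<lambda>r. \<forall>t<n. r (xs t) = x t \<and> r (ys t) = y t) (dot acc tmp xs ys n) (2 * n) {acc, tmp}
           (\<lambda>r. r acc = (\<Sum>t<n. x t * y t))"
proof -
  define I where "I i r \<longleftrightarrow> (\<forall>t<n. r (xs t) = x t \<and> r (ys t) = y t) \<and> r acc = (\<Sum>t<i. x t * y t)" for i r
  have "hoare (I i) (Arith Mul tmp (xs i) (ys i) \<circ> Arith Add acc acc tmp) 2 {acc, tmp} (I (Suc i))"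
    if "i < n" for i
  proof (rule hoare_seq)
    show "hoare (I i) (Arith Mul tmp (xs i) (ys i)) 1 {tmp} (\<lambda>r. I i r \<and> r tmp = x i * y i)"
      by (rule hoare_arith) (use assms that in \<open>auto simp: I_def\<close>)
    show "hoare (\<lambda>r. I i r \<and> r tmp = x i * y i) (Arith Add acc acc tmp) 1 {acc} (I (Suc i))"
      by (rule hoare_arith) (use assms in \<open>auto simp: I_def\<close>)
  qed auto
  then have loop: "hoare (I 0) (for_each (\<lambda>t. Arith Mul tmp (xs t) (ys t) \<circ> Arith Add acc acc tmp) [0..<n])
      (n * 2) {acc, tmp} (I n)"
    by (rule hoare_for_upto)
  have init: "hoare (\<lambda>r. \<forall>t<n. r (xs t) = x t \<and> r (ys t) = y t) (Const 0 acc) 0 {acc} (I 0)"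
    by (rule hoare_const) (use assms in \<open>auto simp: I_def\<close>)
  have "hoare (\<lambda>r. \<forall>t<n. r (xs t) = x t \<and> r (ys t) = y t) (dot acc tmp xs ys n) (2 * n)
      {acc, tmp} (I n)"
    unfolding dot_def by (rule hoare_seq[OF init loop]) auto
  then show ?thesis
    by (rule hoare_conseq) (simp_all add: I_def)
qed

section \<open>The algorithm\<close>

datatype reg = Qreg nat nat | Wreg nat | Tmp | Den | Out nat

instance reg :: countable
  by countable_datatype

context
  fixes M K :: nat
begin

definition inp :: "nat \<Rightarrow> nat \<Rightarrow> nat" where
  "inp j b = j * K + b"

definition loc :: "reg \<Rightarrow> nat" where
  "loc x = M * K + to_nat x"

lemma loc_eq_iff [simp]: "loc x = loc y \<longleftrightarrow> x = y"
  unfolding loc_def by simp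

lemma inp_less: "j < M \<Longrightarrow> b < K \<Longrightarrow> inp j b < M * K"
proof -
  assume "j < M" "b < K"
  then have "j * K + b < (j + 1) * K" by simp
  also have "\<dots> \<le> M * K" using \<open>j < M\<close> by (intro mult_right_mono) auto
  finally show ?thesis unfolding inp_def .
qed

lemma inp_neq_loc [simp]: "j < M \<Longrightarrow> b < K \<Longrightarrow> inp j b \<noteq> loc x"
  using inp_less[of j b] by (simp add: loc_def)

definition holds_input :: "(nat \<Rightarrow> nat \<Rightarrow> real) \<Rightarrow> (nat \<Rightarrow> real) \<Rightarrow> bool" where
  "holds_input V r \<longleftrightarrow> (\<forall>j<M. \<forall>b<K. r (inp j b) = V j b)"

definition holds_matrix :: "(nat \<Rightarrow> nat \<Rightarrow> real) \<Rightarrow> (nat \<Rightarrow> real) \<Rightarrow> bool" where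
  "holds_matrix Q r \<longleftrightarrow> (\<forall>a<K. \<forall>b<K. r (loc (Qreg a b)) = Q a b)"

definition holds_vector :: "(nat \<Rightarrow> real) \<Rightarrow> (nat \<Rightarrow> real) \<Rightarrow> bool" where
  "holds_vector w r \<longleftrightarrow> (\<forall>a<K. r (loc (Wreg a)) = w a)"

lemma holds_input_unchanged:
  "holds_input V r \<Longrightarrow> \<forall>x. x \<notin> loc ` X \<longrightarrow> r' x = r x \<Longrightarrow> holds_input V r'"
  unfolding holds_input_def by (metis imageE inp_neq_loc)

lemma holds_matrix_unchanged:
  "holds_matrix Q r \<Longrightarrow> \<forall>x. x \<notin> loc ` X \<longrightarrow> r' x = r x \<Longrightarrow> (\<And>a b. Qreg a b \<notin> X) \<Longrightarrow> holds_matrix Q r'"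
  unfolding holds_matrix_def by (metis imageE loc_eq_iff)

lemma holds_vector_unchanged:
  "holds_vector w r \<Longrightarrow> \<forall>x. x \<notin> loc ` X \<longrightarrow> r' x = r x \<Longrightarrow> (\<And>a. Wreg a \<notin> X) \<Longrightarrow> holds_vector w r'"
  unfolding holds_vector_def by (metis imageE loc_eq_iff)

lemma holds_input_upd [simp]: "holds_input V (r(loc x := v)) = holds_input V r"
  unfolding holds_input_def by simp

lemma holds_matrix_upd [simp]: "(\<And>a b. x \<noteq> Qreg a b) \<Longrightarrow> holds_matrix Q (r(loc x := v)) = holds_matrix Q r"
  unfolding holds_matrix_def by (metis fun_upd_other loc_eq_iff)

lemma holds_vector_upd [simp]: "(\<And>a. x \<noteq> Wreg a) \<Longrightarrow> holds_vector w (r(loc x := v)) = holds_vector w r"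
  unfolding holds_vector_def by (metis fun_upd_other loc_eq_iff)

definition mat_vec_prog :: "nat \<Rightarrow> frag" where
  "mat_vec_prog j = for_each (\<lambda>a. dot (loc (Wreg a)) (loc Tmp) (\<lambda>b. loc (Qreg a b)) (inp j) K) [0..<K]"

lemma hoare_mat_vec_prog:
  assumes "j < M"
  shows "hoare (\<lambda>r. holds_input V r \<and> holds_matrix Q r) (mat_vec_prog j) (K * (2 * K)) (loc ` (range Wreg \<union> {Tmp}))
           (\<lambda>r. holds_input V r \<and> holds_matrix Q r \<and> holds_vector (mat_vec K Q (V j)) r)"
proof -
  define I where "I a r \<longleftrightarrow> holds_input V r \<and> holds_matrix Q r \<and> (\<forall>a'<a. r (loc (Wreg a')) = mat_vec K Q (V j) a')"
    for a r
  have "hoare (I a) (dot (loc (Wreg a)) (loc Tmp) (\<lambda>b. loc (Qreg a b)) (inp j) K) (2 * K)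
      (loc ` (range Wreg \<union> {Tmp})) (I (Suc a))" if "a < K" for a
  proof (rule hoare_frame[OF hoare_dot, where F = "I a"])
    show "I a r \<Longrightarrow> (\<forall>t<K. r (loc (Qreg a t)) = Q a t \<and> r (inp j t) = V j t) \<and> I a r" for r
      using assms that by (simp add: I_def holds_input_def holds_matrix_def)
    show "I a r'" if "I a r" "\<forall>x. x \<notin> {loc (Wreg a), loc Tmp} \<longrightarrow> r' x = r x" for r r'
      using that holds_input_unchanged[of V r "{Wreg a, Tmp}" r'] holds_matrix_unchanged[of Q r "{Wreg a, Tmp}" r']
      by (simp add: I_def)
    show "r (loc (Wreg a)) = (\<Sum>t<K. Q a t * V j t) \<Longrightarrow> I a r \<Longrightarrow> I (Suc a) r" for r
      by (auto simp: I_def mat_vec_def less_Suc_eq)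
  qed (use assms in auto)
  then have "hoare (I 0) (mat_vec_prog j) (K * (2 * K)) (loc ` (range Wreg \<union> {Tmp})) (I K)"
    unfolding mat_vec_prog_def by (rule hoare_for_upto)
  then show ?thesis
    by (rule hoare_conseq) (auto simp: I_def holds_vector_def)
qed

definition downdate_entry :: "nat \<Rightarrow> nat \<Rightarrow> frag" where
  "downdate_entry a b = Arith Mul (loc Tmp) (loc (Wreg a)) (loc (Wreg b))
     \<circ> Arith Div (loc Tmp) (loc Tmp) (loc Den)
     \<circ> Arith Sub (loc (Qreg a b)) (loc (Qreg a b)) (loc Tmp)"

definition downdate_prog :: frag where
  "downdate_prog = for_each (\<lambda>a. for_each (downdate_entry a) [0..<K]) [0..<K]"

lemma hoare_downdate_prog:
  assumes "g \<noteq> 0"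
  shows "hoare (\<lambda>r. holds_matrix Q r \<and> holds_vector w r \<and> r (loc Den) = g) downdate_prog (K * (K * 3))
           (loc ` (range (case_prod Qreg) \<union> {Tmp})) (\<lambda>r. holds_matrix (\<lambda>a b. Q a b - w a * w b / g) r)"
proof -
  define J where "J a b r \<longleftrightarrow> holds_vector w r \<and> r (loc Den) = g \<and>
      holds_matrix (\<lambda>a' b'. if a' < a \<or> a' = a \<and> b' < b then Q a' b' - w a' * w b' / g else Q a' b') r"
    for a b r
  have entry: "hoare (J a b) (downdate_entry a b) 3 (loc ` (range (case_prod Qreg) \<union> {Tmp})) (J a (Suc b))"
    if "a < K" "b < K" for a b
    unfolding downdate_entry_def
  proof (rule hoare_seq[OF hoare_seq])
    show "hoare (J a b) (Arith Mul (loc Tmp) (loc (Wreg a)) (loc (Wreg b))) 1 {loc Tmp}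
        (\<lambda>r. J a b r \<and> r (loc Tmp) = w a * w b)"
      by (rule hoare_arith) (use that in \<open>simp add: J_def holds_vector_def\<close>)
    show "hoare (\<lambda>r. J a b r \<and> r (loc Tmp) = w a * w b) (Arith Div (loc Tmp) (loc Tmp) (loc Den)) 1
        {loc Tmp} (\<lambda>r. J a b r \<and> r (loc Tmp) = w a * w b / g)"
      by (rule hoare_arith) (use assms in \<open>simp add: J_def\<close>)
    show "hoare (\<lambda>r. J a b r \<and> r (loc Tmp) = w a * w b / g)
        (Arith Sub (loc (Qreg a b)) (loc (Qreg a b)) (loc Tmp)) 1 {loc (Qreg a b)} (J a (Suc b))"
      by (rule hoare_arith) (use that in \<open>auto simp: J_def holds_matrix_def holds_vector_def less_Suc_eq\<close>)
  qed auto
  have "hoare (J a 0) (for_each (downdate_entry a) [0..<K]) (K * 3)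
      (loc ` (range (case_prod Qreg) \<union> {Tmp})) (J (Suc a) 0)" if "a < K" for a
  proof -
    have "J a K = J (Suc a) 0"
      by (auto simp: J_def holds_matrix_def less_Suc_eq fun_eq_iff)
    with hoare_for_upto[of K "J a", OF entry[OF that]] show ?thesis by simp
  qed
  then have "hoare (J 0 0) downdate_prog (K * (K * 3)) (loc ` (range (case_prod Qreg) \<union> {Tmp})) (J K 0)"
    unfolding downdate_prog_def by (rule hoare_for_upto[of K "\<lambda>a. J a 0"])
  then show ?thesis
    by (rule hoare_conseq) (auto simp: J_def holds_matrix_def)
qed

definition pivot_prog :: "bool \<Rightarrow> nat \<Rightarrow> frag" where
  "pivot_prog free j = dot (loc Den) (loc Tmp) (inp j) (\<lambda>a. loc (Wreg a)) K
     \<circ> Const (of_bool free) (loc Tmp)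
     \<circ> Arith Add (loc Den) (loc Den) (loc Tmp)"

lemma hoare_pivot_prog:
  fixes V Q :: "nat \<Rightarrow> nat \<Rightarrow> real"
  assumes "j < M"
  defines "P \<equiv> \<lambda>r. holds_input V r \<and> holds_matrix Q r \<and> holds_vector (mat_vec K Q (V j)) r"
  shows "hoare P (pivot_prog free j) (2 * K + 1) (loc ` {Den, Tmp}) (\<lambda>r. P r \<and> r (loc Den) = denom K free Q (V j))"
proof -
  let ?w = "mat_vec K Q (V j)"
  let ?D = "\<lambda>r. P r \<and> r (loc Den) = (\<Sum>a<K. V j a * ?w a)"
  have dot: "hoare P (dot (loc Den) (loc Tmp) (inp j) (\<lambda>a. loc (Wreg a)) K) (2 * K) (loc ` {Den, Tmp}) ?D"
  proof (rule hoare_frame[OF hoare_dot, where F = P])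
    show "P r \<Longrightarrow> (\<forall>t<K. r (inp j t) = V j t \<and> r (loc (Wreg t)) = ?w t) \<and> P r" for r
      using assms(1) by (simp add: P_def holds_input_def holds_vector_def)
    show "P r'" if "P r" "\<forall>x. x \<notin> {loc Den, loc Tmp} \<longrightarrow> r' x = r x" for r r'
      using that holds_input_unchanged[of V r "{Den, Tmp}" r'] holds_matrix_unchanged[of Q r "{Den, Tmp}" r']
        holds_vector_unchanged[of ?w r "{Den, Tmp}" r']
      by (simp add: P_def)
  qed (use assms(1) in auto)
  have load: "hoare ?D (Const (of_bool free) (loc Tmp)) 0 {loc Tmp} (\<lambda>r. ?D r \<and> r (loc Tmp) = of_bool free)"
    by (rule hoare_const) (simp add: P_def split del: split_of_bool)
  have add: "hoare (\<lambda>r. ?D r \<and> r (loc Tmp) = of_bool free) (Arith Add (loc Den) (loc Den) (loc Tmp))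
      1 {loc Den} (\<lambda>r. P r \<and> r (loc Den) = denom K free Q (V j))"
    by (rule hoare_arith) (simp add: P_def denom_def)
  have "hoare ?D (Const (of_bool free) (loc Tmp) \<circ> Arith Add (loc Den) (loc Den) (loc Tmp)) 1 (loc ` {Den, Tmp})
      (\<lambda>r. P r \<and> r (loc Den) = denom K free Q (V j))"
    by (rule hoare_seq[OF load add]) auto
  then show ?thesis
    unfolding pivot_prog_def o_assoc[symmetric] by (rule hoare_seq[OF dot]) auto
qed

definition update_prog :: "bool \<Rightarrow> nat \<Rightarrow> frag" where
  "update_prog free j = mat_vec_prog j \<circ> pivot_prog free j \<circ> downdate_prog"

definition update_cost :: nat where
  "update_cost = K * (2 * K) + (2 * K + 1) + K * (K * 3)"

lemma hoare_update_prog: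
  assumes "j < M" and "denom K free Q (V j) \<noteq> 0"
  shows "hoare (\<lambda>r. holds_input V r \<and> holds_matrix Q r) (update_prog free j) update_cost (range loc)
           (\<lambda>r. holds_input V r \<and> holds_matrix (downdate K free Q (V j)) r)"
proof -
  let ?P = "\<lambda>r. holds_input V r \<and> holds_matrix Q r \<and> holds_vector (mat_vec K Q (V j)) r"
  have "hoare (\<lambda>r. ?P r \<and> r (loc Den) = denom K free Q (V j)) downdate_prog (K * (K * 3)) (range loc)
      (\<lambda>r. holds_input V r \<and> holds_matrix (downdate K free Q (V j)) r)"
  proof (rule hoare_frame[OF hoare_downdate_prog[OF assms(2)], where F = "holds_input V"])
    show "holds_input V r'" if "holds_input V r" "\<forall>x. x \<notin> loc ` (range (case_prod Qreg) \<union> {Tmp}) \<longrightarrow> r' x = r x"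
      for r r'
      using holds_input_unchanged[OF that] .
  qed (auto simp: downdate_def[abs_def])
  then have "hoare ?P (pivot_prog free j \<circ> downdate_prog) (2 * K + 1 + K * (K * 3)) (range loc)
      (\<lambda>r. holds_input V r \<and> holds_matrix (downdate K free Q (V j)) r)"
    by (rule hoare_seq[OF hoare_pivot_prog[OF assms(1)]]) auto
  then show ?thesis
    unfolding update_prog_def o_assoc[symmetric]
    by (rule hoare_seq[OF hoare_mat_vec_prog[OF assms(1)]]) (auto simp: update_cost_def)
qed

lemma hoare_updates:
  assumes "set xs \<subseteq> {..<M}"
    and "pivots_nonzero K V free Q xs"
  shows "hoare (\<lambda>r. holds_input V r \<and> holds_matrix Q r) (for_each (update_prog free) xs)
           (length xs * update_cost) (range loc)
           (\<lambda>r. holds_input V r \<and> holds_matrix (updates K V free Q xs) r)"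
proof -
  have "hoare (\<lambda>r. holds_input V r \<and> holds_matrix (updates K V free Q ys) r) (update_prog free x)
      update_cost (range loc)
      (\<lambda>r. holds_input V r \<and> holds_matrix (updates K V free Q (ys @ [x])) r)"
    if "xs = ys @ x # zs" for ys x zs
    using hoare_update_prog[where j = x and Q = "updates K V free Q ys"] assms that
    by (auto simp: updates_append pivots_nonzero_def)
  from hoare_for_each[OF this] show ?thesis
    by simp
qed

definition output_prog :: "nat \<Rightarrow> frag" where
  "output_prog i = mat_vec_prog i \<circ> dot (loc (Out i)) (loc Tmp) (inp i) (\<lambda>a. loc (Wreg a)) K"

definition output_cost :: nat where
  "output_cost = K * (2 * K) + 2 * K"

lemma hoare_output_prog:
  assumes "i < M"
  shows "hoare (\<lambda>r. holds_input V r \<and> holds_matrix Q r) (output_prog i) output_cost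
           (loc ` (range Wreg \<union> {Tmp, Out i}))
           (\<lambda>r. holds_input V r \<and> holds_matrix Q r \<and> r (loc (Out i)) = bilin K Q (V i) (V i))"
proof -
  let ?w = "mat_vec K Q (V i)"
  let ?P = "\<lambda>r. holds_input V r \<and> holds_matrix Q r \<and> holds_vector ?w r"
  have "hoare ?P (dot (loc (Out i)) (loc Tmp) (inp i) (\<lambda>a. loc (Wreg a)) K) (2 * K)
      (loc ` {Out i, Tmp}) (\<lambda>r. holds_input V r \<and> holds_matrix Q r \<and> r (loc (Out i)) = bilin K Q (V i) (V i))"
  proof (rule hoare_frame[OF hoare_dot, where F = ?P])
    show "?P r \<Longrightarrow> (\<forall>t<K. r (inp i t) = V i t \<and> r (loc (Wreg t)) = ?w t) \<and> ?P r" for r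
      using assms by (simp add: holds_input_def holds_vector_def)
    show "?P r'" if "?P r" "\<forall>x. x \<notin> {loc (Out i), loc Tmp} \<longrightarrow> r' x = r x" for r r'
      using that holds_input_unchanged[of V r "{Out i, Tmp}" r'] holds_matrix_unchanged[of Q r "{Out i, Tmp}" r']
        holds_vector_unchanged[of ?w r "{Out i, Tmp}" r']
      by simp
  qed (use assms in \<open>auto simp: bilin_mat_vec\<close>)
  then show ?thesis
    unfolding output_prog_def
    by (rule hoare_seq[OF hoare_mat_vec_prog[OF assms]]) (auto simp: output_cost_def)
qed

lemma hoare_outputs:
  assumes "distinct xs" "set xs \<subseteq> {..<M}"
  shows "hoare (\<lambda>r. holds_input V r \<and> holds_matrix Q r) (for_each output_prog xs)
           (length xs * output_cost) (range loc)
           (\<lambda>r. \<forall>i\<in>set xs. r (loc (Out i)) = bilin K Q (V i) (V i))"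
proof -
  define I where "I ys r \<longleftrightarrow> holds_input V r \<and> holds_matrix Q r \<and>
      (\<forall>i\<in>set ys. r (loc (Out i)) = bilin K Q (V i) (V i))" for ys r
  have "hoare (I ys) (output_prog x) output_cost (range loc) (I (ys @ [x]))" if "xs = ys @ x # zs" for ys x zs
  proof (rule hoare_frame[OF hoare_output_prog, where F = "\<lambda>r. \<forall>i\<in>set ys. r (loc (Out i)) = bilin K Q (V i) (V i)"])
    show "x < M" using assms(2) that by auto
    show "\<forall>i\<in>set ys. r' (loc (Out i)) = bilin K Q (V i) (V i)"
      if "\<forall>i\<in>set ys. r (loc (Out i)) = bilin K Q (V i) (V i)"
        "\<forall>y. y \<notin> loc ` (range Wreg \<union> {Tmp, Out x}) \<longrightarrow> r' y = r y" for r r'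
    proof
      fix i assume "i \<in> set ys"
      moreover have "x \<notin> set ys" using assms(1) \<open>xs = ys @ x # zs\<close> by simp
      ultimately have "loc (Out i) \<notin> loc ` (range Wreg \<union> {Tmp, Out x})"
        by auto
      then show "r' (loc (Out i)) = bilin K Q (V i) (V i)"
        using that \<open>i \<in> set ys\<close> by simp
    qed
  qed (auto simp: I_def)
  from hoare_for_each[of xs I, OF this] show ?thesis
    by (rule hoare_conseq) (auto simp: I_def)
qed

definition init_prog :: frag where
  "init_prog = for_each (\<lambda>a. Const 1 (loc (Qreg a a))) [0..<K]"

lemma hoare_init_prog:
  "hoare (holds_matrix (\<lambda>_ _. 0)) init_prog 0 (range loc) (holds_matrix (\<lambda>a b. of_bool (a = b)))"
proof -
  have "hoare (holds_matrix (\<lambda>a' b. of_bool (a' = b \<and> a' < a))) (Const 1 (loc (Qreg a a))) 0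
      {loc (Qreg a a)} (holds_matrix (\<lambda>a' b. of_bool (a' = b \<and> a' < Suc a)))" for a
    by (rule hoare_const) (auto simp: holds_matrix_def less_Suc_eq)
  then have "hoare (holds_matrix (\<lambda>a' b. of_bool (a' = b \<and> a' < a))) (Const 1 (loc (Qreg a a))) 0
      (range loc) (holds_matrix (\<lambda>a' b. of_bool (a' = b \<and> a' < Suc a)))" for a
    by (rule hoare_conseq) auto
  from hoare_for_upto[of K "\<lambda>a. holds_matrix (\<lambda>a' b. of_bool (a' = b \<and> a' < a))", OF this]
  show ?thesis
    unfolding init_prog_def mult_0_right by (rule hoare_conseq) (auto simp: holds_matrix_def)
qed

definition marginals_prog :: "nat list \<Rightarrow> nat list \<Rightarrow> prog" where
  "marginals_prog fl al = (init_prog \<circ> for_each (update_prog True) fl \<circ> for_each (update_prog False) al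
     \<circ> for_each output_prog fl) (Halt (\<lambda>i. loc (Out i)))"

end

lemma input_regs_holds:
  "holds_input M K V (input_regs M K V)" "holds_matrix M K (\<lambda>_ _. 0) (input_regs M K V)"
  by (auto simp: holds_input_def holds_matrix_def input_regs_def inp_less loc_def) (simp add: inp_def)

lemma run_marginals_prog:
  fixes M K :: nat and V :: "nat \<Rightarrow> nat \<Rightarrow> real" and fl al :: "nat list"
  defines "Q \<equiv> updates K V False (updates K V True (\<lambda>a b. of_bool (a = b)) fl) al"
  assumes "distinct fl" "set fl \<subseteq> {..<M}" "set al \<subseteq> {..<M}"
    and "pivots_nonzero K V True (\<lambda>a b. of_bool (a = b)) fl"
    and "pivots_nonzero K V False (updates K V True (\<lambda>a b. of_bool (a = b)) fl) al"
  shows "\<exists>outs. run (marginals_prog M K fl al) (input_regs M K V)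
      = Some (outs, length fl * update_cost K + length al * update_cost K + length fl * output_cost K)
    \<and> (\<forall>i\<in>set fl. outs i = bilin K Q (V i) (V i))"
proof -
  have init: "hoare (\<lambda>r. holds_input M K V r \<and> holds_matrix M K (\<lambda>_ _. 0) r) (init_prog M K) 0 (range (loc M K))
      (\<lambda>r. holds_input M K V r \<and> holds_matrix M K (\<lambda>a b. of_bool (a = b)) r)"
    by (rule hoare_frame[OF hoare_init_prog, where F = "holds_input M K V"]) (auto intro: holds_input_unchanged)
  let ?I = "\<lambda>a b. of_bool (a = b) :: real"
  have "hoare (\<lambda>r. holds_input M K V r \<and> holds_matrix M K (\<lambda>_ _. 0) r)
      (init_prog M K \<circ> for_each (update_prog M K True) fl) (length fl * update_cost K) (range (loc M K))
      (\<lambda>r. holds_input M K V r \<and> holds_matrix M K (updates K V True ?I fl) r)"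
    by (rule hoare_seq[OF init hoare_updates[OF assms(3,5)]]) auto
  then have "hoare (\<lambda>r. holds_input M K V r \<and> holds_matrix M K (\<lambda>_ _. 0) r)
      (init_prog M K \<circ> for_each (update_prog M K True) fl \<circ> for_each (update_prog M K False) al)
      (length fl * update_cost K + length al * update_cost K) (range (loc M K))
      (\<lambda>r. holds_input M K V r \<and> holds_matrix M K Q r)"
    unfolding Q_def by (rule hoare_seq[OF _ hoare_updates[OF assms(4,6)]]) auto
  then have "hoare (\<lambda>r. holds_input M K V r \<and> holds_matrix M K (\<lambda>_ _. 0) r)
      (init_prog M K \<circ> for_each (update_prog M K True) fl \<circ> for_each (update_prog M K False) al
         \<circ> for_each (output_prog M K) fl)
      (length fl * update_cost K + length al * update_cost K + length fl * output_cost K) (range (loc M K))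
      (\<lambda>r. \<forall>i\<in>set fl. r (loc M K (Out i)) = bilin K Q (V i) (V i))"
    by (rule hoare_seq[OF _ hoare_outputs[OF assms(2,3)]]) auto
  from hoare_run[OF this conjI[OF input_regs_holds]] show ?thesis
    unfolding marginals_prog_def by auto
qed

lemma marginals_cost_le:
  assumes "1 \<le> K"
  shows "real (a * update_cost K + b * update_cost K + a * output_cost K)
    \<le> 12 * (real K ^ 3 + real b ^ 3 + real K ^ 2 * real b ^ 2 + real a * real K ^ 2)"
proof -
  have "K \<le> K * K" "1 \<le> K * K" "b \<le> b ^ 2"
    using assms by (simp_all add: power2_eq_square le_square)
  moreover have "update_cost K = 5 * (K * K) + 2 * K + 1" "output_cost K = 2 * (K * K) + 2 * K"
    by (simp_all add: update_cost_def output_cost_def algebra_simps)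
  ultimately have "update_cost K \<le> 8 * K ^ 2" "output_cost K \<le> 4 * K ^ 2"
    unfolding power2_eq_square by linarith+
  then have "a * update_cost K + b * update_cost K + a * output_cost K \<le> a * (8 * K ^ 2) + b ^ 2 * (8 * K ^ 2) + a * (4 * K ^ 2)"
    using \<open>b \<le> b ^ 2\<close> by (intro add_mono mult_mono) auto
  also have "\<dots> \<le> 12 * (K ^ 2 * b ^ 2 + a * K ^ 2)"
    by (simp add: algebra_simps)
  finally have "real (a * update_cost K + b * update_cost K + a * output_cost K) \<le> real (12 * (K ^ 2 * b ^ 2 + a * K ^ 2))"
    by (simp only: of_nat_le_iff)
  also have "\<dots> \<le> 12 * (real K ^ 3 + real b ^ 3 + real K ^ 2 * real b ^ 2 + real a * real K ^ 2)"
    by simp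
  finally show ?thesis .
qed

text \<open>For \<open>K = 0\<close> the bound may be \<open>0\<close> while the general program still spends one addition per
  item; but then every conditional marginal is \<open>0\<close>, which the empty program outputs.\<close>

definition conditional_marginals_prog :: "nat \<Rightarrow> nat \<Rightarrow> nat set \<Rightarrow> prog" where
  "conditional_marginals_prog M K A = (if K = 0 then Halt (\<lambda>_. 0)
     else marginals_prog M K (sorted_list_of_set ({..<M} - A)) (sorted_list_of_set A))"

lemma run_conditional_marginals_prog:
  assumes A: "A \<subseteq> {..<M}" and pos: "0 < dpp_event_prob M (gram K V) (\<lambda>S. A \<subseteq> S)"
  shows "\<exists>outs c. run (conditional_marginals_prog M K A) (input_regs M K V) = Some (outs, c) \<and>
    (\<forall>i\<in>{..<M} - A. outs i = cond_marginal M (gram K V) A i) \<and>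
    real c \<le> 12 * (real K ^ 3 + real (card A) ^ 3 + real K ^ 2 * real (card A) ^ 2 + real (card ({..<M} - A)) * real K ^ 2)"
proof -
  define fl al where "fl = sorted_list_of_set ({..<M} - A)" and "al = sorted_list_of_set A"
  have "finite A" using A finite_subset by blast
  then have lists: "distinct fl" "set fl = {..<M} - A" "distinct al" "set al = A"
    "length fl = card ({..<M} - A)" "length al = card A"
    by (simp_all add: fl_def al_def)
  let ?Q = "updates K V False (updates K V True (\<lambda>a b. of_bool (a = b)) fl) al"
  note cond = represents_conditioned[OF A pos lists(1-4)]
  obtain c where "represents K V A ({..<M} - A) c ?Q"
    using cond(1) by blast
  note marginal = cond_marginal_represents[OF A pos this]
  show ?thesis
  proof (cases "K = 0")
    case True
    then show ?thesis
      using marginal by (simp add: conditional_marginals_prog_def input_regs_def bilin_def)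
  next
    case False
    have "set fl \<subseteq> {..<M}" "set al \<subseteq> {..<M}"
      using A lists by auto
    then obtain outs where run: "run (marginals_prog M K fl al) (input_regs M K V)
        = Some (outs, length fl * update_cost K + length al * update_cost K + length fl * output_cost K)"
      and outs: "\<forall>i\<in>set fl. outs i = bilin K ?Q (V i) (V i)"
      using run_marginals_prog[OF lists(1) _ _ cond(2) cond(3)] by blast
    have "real (length fl * update_cost K + length al * update_cost K + length fl * output_cost K)
        \<le> 12 * (real K ^ 3 + real (card A) ^ 3 + real K ^ 2 * real (card A) ^ 2 + real (card ({..<M} - A)) * real K ^ 2)"
      using False marginals_cost_le[of K "length fl" "length al"] lists(5,6) by simp
    with run outs marginal lists(2) False show ?thesis
      unfolding conditional_marginals_prog_def fl_def[symmetric] al_def[symmetric] by auto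
  qed
qed

theorem mainTheorem1:
  shows "\<exists>C::real. \<forall>M K A. 1 \<le> M \<longrightarrow> K \<le> M \<longrightarrow> A \<subseteq> {..<M} \<longrightarrow>
    (\<exists>p::prog. \<forall>V::nat \<Rightarrow> nat \<Rightarrow> real.
       0 < dpp_event_prob M (gram K V) (\<lambda>S. A \<subseteq> S) \<longrightarrow>
       (\<exists>outs c. run p (input_regs M K V) = Some (outs, c) \<and>
          (\<forall>i\<in>{..<M} - A. outs i = cond_marginal M (gram K V) A i) \<and>
          real c \<le> C * (real K ^ 3 + real (card A) ^ 3 + real K ^ 2 * real (card A) ^ 2
                        + real (card ({..<M} - A)) * real K ^ 2)))"
  using run_conditional_marginals_prog by blast

end
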